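(* A Hausdorff topological space $\langle X,\tau\rangle$ is a continuous open image of the Sorgenfrey line $\mathbb{S}$ (i.e. there is a continuous open surjection $\mathbb{S}\to\langle X,\tau\rangle$) if and only if there exists a Sorgenfrey base for $\langle X,\tau\rangle$.
   Context: The Sorgenfrey line $\mathbb{S}$ is $\mathbb{R}$ with the topology generated by $\{[a,b):a,b\in\mathbb{R}\}$. Notation: $\omega=\{0,1,2,\dots\}$, each $n\in\omega$ is identified with $\{0,\dots,n-1\}$; ${}^{<\omega}\omega$ is the set of finite sequences of naturals, ${}^\omega\omega$ the set of infinite ones; $\mathrm{lh}(s)$ is the length; $s\sqsubseteq t$ means $s=t\upharpoonright \mathrm{lh}(s)$, $s\sqsubset t$ means $s\sqsubseteq t$, $s\neq t$; $a^\frown k$ is $a$ extended by $k$. For $a,b\in{}^{<\omega}\omega\cup{}^\omega\omega$: $a\triangleleft b$ iff there is $n$ (in the domains of both) with $a\upharpoonright n=b\upharpoonright n$ and $a(n)<b(n)$; $a\trianglelefteq b$ iff $a\triangleleft b$ or $a=b$. A Souslin scheme on a set $X$ is a family $\mathbf V=\langle V_a\rangle_{a\in{}^{<\omega}\omega}$ of subsets of $X$. For $p\in{}^\omega\omega$, $\mathrm{fruit}(\mathbf V,p)=\bigcap_n V_{p\upharpoonright n}$. $\mathbf V$ is covering if $V_{\langle\rangle}=X$ and $V_a=\bigcup_n V_{a^\frown n}$ for all $a$; complete if $\mathrm{fruit}(\mathbf V,q)\ne\emptyset$ for all $q\in{}^\omega\omega$; open (on a space $\langle X,\tau\rangle$)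 if all $V_a\in\tau$. For $x\in X$, $q\in{}^\omega\omega$ is a branch of $x$ if $x\in\mathrm{fruit}(\mathbf V,q)$; $\mathrm{branches}(\mathbf V,x)$ is the set of branches of $x$. For $q\in{}^\omega\omega$, $n\in\omega$: $\mathrm{rsequences}(q,n)=\{p\in{}^\omega\omega: q\triangleleft p,\ q\upharpoonright n=p\upharpoonright n\}$ and $\mathrm{cut}(\mathbf V,q,n)=\bigcup\{\mathrm{fruit}(\mathbf V,p):p\in\mathrm{rsequences}(q,n)\}$. A branch $q$ of $x$ is a $\tau$-base branch of $x$ if $\{\mathrm{cut}(\mathbf V,q,m)\cup\{x\}:m\in\omega\}$ is an open neighborhood base at $x$ in $\langle X,\tau\rangle$; $\mathrm{BB}(\mathbf V,x,\tau)$ denotes the set of $\tau$-base branches of $x$. A Sorgenfrey base for a Hausdorff space $\langle X,\tau\rangle$ is an open complete covering Souslin scheme $\mathbf V$ on $\langle X,\tau\rangle$ such that (S1) for every $x\in X$, every $q\in\mathrm{branches}(\mathbf V,x)$ and every $n\in\omega$ there is $t\in\mathrm{BB}(\mathbf V,x,\tau)$ with $t\upharpoonright n=q\upharpoonright n$; and (S2) for every $q\in{}^\omega\omega$ there is $z\in X$ with $q\in\mathrm{BB}(\mathbf V,z,\tau)$. *)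

theory Defs
  imports "HOL-Analysis.Analysis"
begin

definition sorgenfrey :: "real topology" where
  "sorgenfrey = topology_generated_by {{a..<b} | a b. True}"

definition restr :: "(nat \<Rightarrow> nat) \<Rightarrow> nat \<Rightarrow> nat list" where
  "restr p n = map p [0..<n]"

definition seq_less :: "(nat \<Rightarrow> nat) \<Rightarrow> (nat \<Rightarrow> nat) \<Rightarrow> bool" where
  "seq_less q p \<longleftrightarrow> (\<exists>n. restr q n = restr p n \<and> q n < p n)"

definition fruit :: "(nat list \<Rightarrow> 'a set) \<Rightarrow> (nat \<Rightarrow> nat) \<Rightarrow> 'a set" where
  "fruit V p = (\<Inter>n. V (restr p n))"

definition covering_scheme :: "'a set \<Rightarrow> (nat list \<Rightarrow> 'a set) \<Rightarrow> bool" where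
  "covering_scheme X V \<longleftrightarrow> V [] = X \<and> (\<forall>a. V a = (\<Union>n. V (a @ [n])))"

definition complete_scheme :: "(nat list \<Rightarrow> 'a set) \<Rightarrow> bool" where
  "complete_scheme V \<longleftrightarrow> (\<forall>q. fruit V q \<noteq> {})"

definition open_scheme :: "'a topology \<Rightarrow> (nat list \<Rightarrow> 'a set) \<Rightarrow> bool" where
  "open_scheme T V \<longleftrightarrow> (\<forall>a. openin T (V a))"

definition branches :: "(nat list \<Rightarrow> 'a set) \<Rightarrow> 'a \<Rightarrow> (nat \<Rightarrow> nat) set" where
  "branches V x = {q. x \<in> fruit V q}"

definition rsequences :: "(nat \<Rightarrow> nat) \<Rightarrow> nat \<Rightarrow> (nat \<Rightarrow> nat) set" where
  "rsequences q n = {p. seq_less q p \<and> restr q n = restr p n}"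

definition cut :: "(nat list \<Rightarrow> 'a set) \<Rightarrow> (nat \<Rightarrow> nat) \<Rightarrow> nat \<Rightarrow> 'a set" where
  "cut V q n = (\<Union>p\<in>rsequences q n. fruit V p)"

definition open_nbhd_base :: "'a topology \<Rightarrow> 'a \<Rightarrow> 'a set set \<Rightarrow> bool" where
  "open_nbhd_base T x \<B> \<longleftrightarrow>
     (\<forall>B\<in>\<B>. openin T B \<and> x \<in> B) \<and>
     (\<forall>U. openin T U \<and> x \<in> U \<longrightarrow> (\<exists>B\<in>\<B>. B \<subseteq> U))"

definition BB :: "(nat list \<Rightarrow> 'a set) \<Rightarrow> 'a \<Rightarrow> 'a topology \<Rightarrow> (nat \<Rightarrow> nat) set" where
  "BB V x T = {q \<in> branches V x. open_nbhd_base T x {cut V q m \<union> {x} | m. True}}"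

definition sorgenfrey_base :: "'a topology \<Rightarrow> (nat list \<Rightarrow> 'a set) \<Rightarrow> bool" where
  "sorgenfrey_base T V \<longleftrightarrow>
     open_scheme T V \<and> complete_scheme V \<and> covering_scheme (topspace T) V \<and>
     (\<forall>x\<in>topspace T. \<forall>q\<in>branches V x. \<forall>n. \<exists>t\<in>BB V x T. restr t n = restr q n) \<and>
     (\<forall>q. \<exists>z\<in>topspace T. q \<in> BB V z T)"

end

theory Submission
  imports Defs
begin

text \<open>Both directions run through a coding c of the reals by Baire space: a surjection
  whose finite prefixes are constant on small intervals [x, x+e), pin x down to arbitrary
  precision, and which is lexicographically increasing on the reals sharing the first digit.
  For such a coding the right cones
  rcone x m = {x} \<union> {u. c u lies lexicographically right of c x and agrees with it below m}
  form a Sorgenfrey neighbourhood base at x.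
  Given a continuous open surjection f, the images of the cylinders of c form a Sorgenfrey base;
  conversely, given a Sorgenfrey base V one lets f x be the point (unique by the Hausdorff
  property) of which c x is a base branch. In both situations f maps rcone x m exactly onto
  cut V (c x) m \<union> {f x}, so f transports the cone base at x to the base of f x given by the
  branch c x; this yields the base branches in one direction and continuity and openness of f
  in the other. The coding sends x to \<lfloor>x\<rfloor> followed by the digits of frac x in an
  expansion whose digit blocks are the half-open intervals [n/(n+1), (n+1)/(n+2)).\<close>

section \<open>The Sorgenfrey line\<close>

lemma openin_sorgenfrey:
  "openin sorgenfrey W \<longleftrightarrow> (\<forall>u\<in>W. \<exists>e>0. {u..<u+e} \<subseteq> W)"
proof
  assume "openin sorgenfrey W"
  then have "generate_topology_on {{a..<b} | a b. True} W"
    unfolding sorgenfrey_def by (rule openin_topology_generated_by)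
  then show "\<forall>u\<in>W. \<exists>e>0. {u..<u+e} \<subseteq> W"
  proof (induction rule: generate_topology_on.induct)
    case (Int a b)
    show ?case
    proof
      fix u assume "u \<in> a \<inter> b"
      then obtain e1 e2 where "e1 > 0" "{u..<u+e1} \<subseteq> a" "e2 > 0" "{u..<u+e2} \<subseteq> b"
        using Int.IH by blast
      then show "\<exists>e>0. {u..<u+e} \<subseteq> a \<inter> b"
        by (intro exI[of _ "min e1 e2"]) (auto simp: subset_iff)
    qed
  next
    case (UN K)
    show ?case
    proof
      fix u assume "u \<in> \<Union>K"
      then obtain k where "k \<in> K" "u \<in> k" by blast
      with UN.IH obtain e where "e > 0" "{u..<u+e} \<subseteq> k" by blast
      with \<open>k \<in> K\<close> show "\<exists>e>0. {u..<u+e} \<subseteq> \<Union>K" by blast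
    qed
  next
    case (Basis s)
    then obtain a b where "s = {a..<b}" by blast
    then show ?case by (intro ballI exI[of _ "b - _"]) auto
  qed simp
next
  assume H: "\<forall>u\<in>W. \<exists>e>0. {u..<u+e} \<subseteq> W"
  let ?B = "{{a..<b} | a b :: real. True}"
  have "W = \<Union>{I \<in> ?B. I \<subseteq> W}"
  proof (intro equalityI subsetI)
    fix u assume "u \<in> W"
    with H obtain e where "e > 0" "{u..<u+e} \<subseteq> W" by blast
    then show "u \<in> \<Union>{I \<in> ?B. I \<subseteq> W}" by (intro UnionI[of "{u..<u+e}"]) auto
  qed blast
  moreover have "generate_topology_on ?B (\<Union>{I \<in> ?B. I \<subseteq> W})"
    by (intro generate_topology_on.UN generate_topology_on.Basis) blast
  ultimately show "openin sorgenfrey W"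
    unfolding sorgenfrey_def openin_topology_generated_by_iff by simp
qed

lemma topspace_sorgenfrey [simp]: "topspace sorgenfrey = UNIV"
proof -
  have "x \<in> {x..<x+1}" for x :: real by simp
  then show ?thesis unfolding sorgenfrey_def topology_generated_by_topspace by blast
qed

section \<open>Prefixes and the lexicographic order\<close>

lemma restr_eq_iff: "restr p n = restr q n \<longleftrightarrow> (\<forall>i<n. p i = q i)"
  unfolding restr_def by (auto simp: list_eq_iff_nth_eq)

lemma restr_0 [simp]: "restr p 0 = []"
  unfolding restr_def by simp

lemma length_restr [simp]: "length (restr p n) = n"
  unfolding restr_def by simp

lemma restr_Suc: "restr p (Suc n) = restr p n @ [p n]"
  unfolding restr_def by simp

lemma restr_Suc_Cons: "restr p (Suc n) = p 0 # restr (\<lambda>k. p (Suc k)) n"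
  unfolding restr_def by (induction n) auto

lemma restr_prefix: "restr p n = restr q n \<Longrightarrow> m \<le> n \<Longrightarrow> restr p m = restr q m"
  by (auto simp: restr_eq_iff)

lemma seq_less_iff: "seq_less q p \<longleftrightarrow> (\<exists>n. (\<forall>i<n. q i = p i) \<and> q n < p n)"
  unfolding seq_less_def restr_eq_iff by simp

lemma seq_less_irrefl: "\<not> seq_less p p"
  unfolding seq_less_iff by auto

lemma seq_less_asym: "seq_less p q \<Longrightarrow> \<not> seq_less q p"
  unfolding seq_less_iff by (metis less_asym linorder_neqE_nat)

lemma seq_less_trans: "seq_less p q \<Longrightarrow> seq_less q r \<Longrightarrow> seq_less p r"
proof -
  assume "seq_less p q" "seq_less q r"
  then obtain n m where nm: "\<forall>i<n. p i = q i" "p n < q n" "\<forall>i<m. q i = r i" "q m < r m"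
    unfolding seq_less_iff by blast
  consider "n < m" | "n = m" | "m < n" by linarith
  then have "(\<forall>i<min n m. p i = r i) \<and> p (min n m) < r (min n m)"
    by cases (use nm in auto)
  then show "seq_less p r" unfolding seq_less_iff by blast
qed

lemma rsequences_contains_cylinder:
  assumes "p \<in> rsequences q m"
  obtains j where "\<And>r. restr r (Suc j) = restr p (Suc j) \<Longrightarrow> r \<in> rsequences q m"
proof -
  from assms obtain j where j: "\<forall>i<j. q i = p i" "q j < p j" "restr q m = restr p m"
    unfolding rsequences_def seq_less_iff by blast
  have "m \<le> j"
  proof (rule ccontr)
    assume "\<not> m \<le> j"
    with j(2,3) show False by (auto simp: restr_eq_iff)
  qed
  have "r \<in> rsequences q m" if "restr r (Suc j) = restr p (Suc j)" for r
  proof -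
    have r: "\<forall>i\<le>j. r i = p i" using that by (simp add: restr_eq_iff)
    with j have "seq_less q r" unfolding seq_less_iff by (intro exI[of _ j]) auto
    moreover from r j(3) \<open>m \<le> j\<close> have "restr q m = restr r m" by (auto simp: restr_eq_iff)
    ultimately show ?thesis unfolding rsequences_def by blast
  qed
  then show ?thesis by (rule that)
qed

section \<open>Souslin schemes and neighbourhood bases\<close>

lemma covering_scheme_branch:
  assumes "covering_scheme X V" "x \<in> X"
  obtains q where "q \<in> branches V x"
proof -
  have root: "V [] = X" and split: "\<And>a. V a = (\<Union>n. V (a @ [n]))"
    using assms(1) unfolding covering_scheme_def by blast+
  define next_digit where "next_digit l = (SOME n. x \<in> V (l @ [n]))" for l
  define L where "L = rec_nat [] (\<lambda>_ l. l @ [next_digit l])"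
  define q where "q i = next_digit (L i)" for i
  have "restr q k = L k \<and> x \<in> V (L k)" for k
  proof (induction k)
    case 0
    then show ?case using root assms(2) unfolding L_def by simp
  next
    case (Suc k)
    then have "\<exists>n. x \<in> V (L k @ [n])" using split[of "L k"] by blast
    then have "x \<in> V (L k @ [next_digit (L k)])" unfolding next_digit_def by (rule someI_ex)
    then show ?case using Suc.IH unfolding L_def q_def by (simp add: restr_Suc)
  qed
  then have "q \<in> branches V x" unfolding branches_def fruit_def by simp
  then show ?thesis by (rule that)
qed

lemma cut_nonempty: "complete_scheme V \<Longrightarrow> cut V q m \<noteq> {}"
proof -
  assume "complete_scheme V"
  define p where "p = q(m := Suc (q m))"
  have "p \<in> rsequences q m"
    unfolding rsequences_def seq_less_iff restr_eq_iff p_def by (auto intro!: exI[of _ m])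
  with \<open>complete_scheme V\<close> show ?thesis unfolding complete_scheme_def cut_def by blast
qed

lemma cut_antimono: "m \<le> m' \<Longrightarrow> cut V q m' \<subseteq> cut V q m"
proof -
  assume "m \<le> m'"
  then have "rsequences q m' \<subseteq> rsequences q m"
    unfolding rsequences_def by (auto simp: restr_eq_iff)
  then show ?thesis unfolding cut_def by blast
qed

lemma BB_cut_subset:
  assumes "q \<in> BB V z T" "openin T U" "z \<in> U"
  obtains m where "cut V q m \<subseteq> U"
proof -
  have "\<exists>B\<in>{cut V q m \<union> {z} | m. True}. B \<subseteq> U"
    using assms unfolding BB_def open_nbhd_base_def by blast
  then show ?thesis using that by blast
qed

lemma BB_unique:
  assumes "Hausdorff_space T" "complete_scheme V" "z \<in> topspace T" "z' \<in> topspace T"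
    and "q \<in> BB V z T" "q \<in> BB V z' T"
  shows "z = z'"
proof (rule ccontr)
  assume "z \<noteq> z'"
  then obtain U U' where U: "openin T U" "openin T U'" "z \<in> U" "z' \<in> U'" "disjnt U U'"
    using assms(1,3,4) unfolding Hausdorff_space_def by blast
  obtain m m' where "cut V q m \<subseteq> U" "cut V q m' \<subseteq> U'"
    using BB_cut_subset[OF assms(5) U(1,3)] BB_cut_subset[OF assms(6) U(2,4)] by metis
  then have "cut V q (max m m') \<subseteq> U \<inter> U'"
    using cut_antimono[of m "max m m'" V q] cut_antimono[of m' "max m m'" V q] by auto
  with U(5) cut_nonempty[OF assms(2)] show False
    unfolding disjnt_def by blast
qed

lemma open_nbhd_baseD:
  assumes "open_nbhd_base T x \<B>"
  shows "B \<in> \<B> \<Longrightarrow> openin T B" and "B \<in> \<B> \<Longrightarrow> x \<in> B"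
    and "openin T U \<Longrightarrow> x \<in> U \<Longrightarrow> \<exists>B\<in>\<B>. B \<subseteq> U"
  using assms unfolding open_nbhd_base_def by blast+

lemma open_nbhd_base_image:
  assumes cont: "continuous_map S T f" and opn: "open_map S T f"
    and x: "x \<in> topspace S" and base: "open_nbhd_base S x \<B>"
  shows "open_nbhd_base T (f x) ((`) f ` \<B>)"
  unfolding open_nbhd_base_def
proof (intro conjI ballI allI impI)
  fix C assume "C \<in> (`) f ` \<B>"
  then obtain B where B: "B \<in> \<B>" "C = f ` B" by blast
  with opn open_nbhd_baseD(1,2)[OF base B(1)]
  show "openin T C" "f x \<in> C" unfolding open_map_def by blast+
next
  fix U assume U: "openin T U \<and> f x \<in> U"
  then have "openin S {z \<in> topspace S. f z \<in> U}"
    using openin_continuous_map_preimage[OF cont] by blast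
  moreover have "x \<in> {z \<in> topspace S. f z \<in> U}" using x U by blast
  ultimately obtain B where "B \<in> \<B>" "B \<subseteq> {z \<in> topspace S. f z \<in> U}"
    using open_nbhd_baseD(3)[OF base] by blast
  then show "\<exists>C\<in>(`) f ` \<B>. C \<subseteq> U" by blast
qed

lemma continuous_open_map_of_nbhd_bases:
  assumes base: "\<And>x. x \<in> topspace S \<Longrightarrow> open_nbhd_base S x (\<B> x)"
    and image_base: "\<And>x. x \<in> topspace S \<Longrightarrow> open_nbhd_base T (f x) ((`) f ` \<B> x)"
  shows "continuous_map S T f" "open_map S T f"
proof -
  have small: "\<exists>B\<in>\<B> x. openin S B \<and> x \<in> B \<and> openin T (f ` B) \<and> f x \<in> f ` B \<and> B \<subseteq> W"
    if x: "x \<in> topspace S" and W: "openin S W" "x \<in> W" for x W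
  proof -
    obtain B where B: "B \<in> \<B> x" "B \<subseteq> W"
      using open_nbhd_baseD(3)[OF base[OF x] W] by blast
    have "openin S B" "x \<in> B" using open_nbhd_baseD(1,2)[OF base[OF x] B(1)] .
    moreover have "openin T (f ` B)" "f x \<in> f ` B"
      using open_nbhd_baseD(1,2)[OF image_base[OF x] imageI[OF B(1)]] .
    ultimately show ?thesis using B by (intro bexI[of _ B]) simp_all
  qed
  have "f x \<in> topspace T" if "x \<in> topspace S" for x
    using small[OF that openin_topspace that] openin_subset by blast
  moreover have "openin S {x \<in> topspace S. f x \<in> U}" if U: "openin T U" for U
  proof (subst openin_subopen, intro ballI)
    fix x assume "x \<in> {x \<in> topspace S. f x \<in> U}"
    then have x: "x \<in> topspace S" "f x \<in> U" by blast+
    obtain C where "C \<in> (`) f ` \<B> x" "C \<subseteq> U"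
      using open_nbhd_baseD(3)[OF image_base[OF x(1)] U x(2)] by blast
    then obtain B where B: "B \<in> \<B> x" "f ` B \<subseteq> U" by blast
    have "openin S B" "x \<in> B" using open_nbhd_baseD(1,2)[OF base[OF x(1)] B(1)] .
    moreover have "B \<subseteq> topspace S" using \<open>openin S B\<close> by (rule openin_subset)
    ultimately show "\<exists>B. openin S B \<and> x \<in> B \<and> B \<subseteq> {x \<in> topspace S. f x \<in> U}"
      using B(2) by blast
  qed
  ultimately show "continuous_map S T f" unfolding continuous_map_def by blast
  show "open_map S T f" unfolding open_map_def
  proof (intro allI impI)
    fix W assume W: "openin S W"
    show "openin T (f ` W)"
    proof (subst openin_subopen, intro ballI)
      fix z assume "z \<in> f ` W"
      then obtain x where x: "x \<in> W" "z = f x" by blast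
      with W have "x \<in> topspace S" using openin_subset by blast
      with small[OF this W x(1)] x(2)
      show "\<exists>C. openin T C \<and> z \<in> C \<and> C \<subseteq> f ` W" by blast
    qed
  qed
qed

section \<open>Codings of the reals by Baire space\<close>

locale sorgenfrey_coding =
  fixes c :: "real \<Rightarrow> nat \<Rightarrow> nat"
  assumes surj_code: "surj c"
    and code_locally_constant: "\<And>x m. \<exists>e>0. \<forall>y\<in>{x..<x+e}. restr (c y) m = restr (c x) m"
    and code_localizes: "\<And>x e. e > 0 \<Longrightarrow> \<exists>m. \<forall>u. restr (c u) m = restr (c x) m \<longrightarrow> \<bar>u - x\<bar> < e"
    and code_mono: "\<And>x y. x < y \<Longrightarrow> c x 0 = c y 0 \<Longrightarrow> seq_less (c x) (c y)"
begin

definition code_cylinder :: "nat list \<Rightarrow> real set" where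
  "code_cylinder a = {x. restr (c x) (length a) = a}"

definition rcone :: "real \<Rightarrow> nat \<Rightarrow> real set" where
  "rcone x m = insert x (c -` rsequences (c x) m)"

lemma mem_rcone_self [simp]: "x \<in> rcone x m"
  unfolding rcone_def by simp

lemma openin_code_cylinder: "openin sorgenfrey (code_cylinder a)"
  unfolding openin_sorgenfrey
proof
  fix u assume u: "u \<in> code_cylinder a"
  obtain e where "e > 0" and e: "\<forall>y\<in>{u..<u+e}. restr (c y) (length a) = restr (c u) (length a)"
    using code_locally_constant[of u "length a"] by blast
  have "{u..<u+e} \<subseteq> code_cylinder a"
  proof
    fix y assume "y \<in> {u..<u+e}"
    with e u show "y \<in> code_cylinder a" unfolding code_cylinder_def by simp
  qed
  with \<open>e > 0\<close> show "\<exists>e>0. {u..<u+e} \<subseteq> code_cylinder a" by blast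
qed

lemma code_cylinder_Nil: "code_cylinder [] = UNIV"
  unfolding code_cylinder_def by simp

lemma code_cylinder_split: "code_cylinder a = (\<Union>n. code_cylinder (a @ [n]))"
proof (intro equalityI subsetI)
  fix x assume "x \<in> code_cylinder a"
  then have "x \<in> code_cylinder (a @ [c x (length a)])"
    unfolding code_cylinder_def by (simp add: restr_Suc)
  then show "x \<in> (\<Union>n. code_cylinder (a @ [n]))" by blast
qed (auto simp: code_cylinder_def restr_Suc)

lemma code_less_imp_less:
  assumes "c u 0 = c x 0" "seq_less (c x) (c u)"
  shows "x < u"
proof (rule ccontr)
  assume "\<not> x < u"
  then consider "u = x" | "u < x" by linarith
  then show False
  proof cases
    case 1
    with assms(2) seq_less_irrefl show False by simp
  next
    case 2
    with code_mono assms(1) have "seq_less (c u) (c x)" by simp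
    with assms(2) seq_less_asym show False by blast
  qed
qed

lemma rcone_trans:
  assumes "u \<in> rcone x m"
  shows "rcone u m \<subseteq> rcone x m"
proof (cases "u = x")
  case False
  with assms have "seq_less (c x) (c u)" "restr (c x) m = restr (c u) m"
    unfolding rcone_def rsequences_def by auto
  show ?thesis
  proof
    fix v assume "v \<in> rcone u m"
    then consider "v = u" | "seq_less (c u) (c v)" "restr (c u) m = restr (c v) m"
      unfolding rcone_def rsequences_def by blast
    then show "v \<in> rcone x m"
      using assms \<open>seq_less (c x) (c u)\<close> \<open>restr (c x) m = restr (c u) m\<close>
        seq_less_trans[of "c x" "c u" "c v"]
      by cases (simp_all add: rcone_def rsequences_def)
  qed
qed simp

lemma interval_subset_rcone: "\<exists>e>0. {x..<x+e} \<subseteq> rcone x m"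
proof -
  obtain e where "e > 0" and e: "\<forall>y\<in>{x..<x+e}. restr (c y) (Suc m) = restr (c x) (Suc m)"
    using code_locally_constant by blast
  have "y \<in> rcone x m" if "y \<in> {x..<x+e}" for y
  proof (cases "y = x")
    case False
    with that have "x < y" by simp
    have "restr (c y) (Suc m) = restr (c x) (Suc m)" using e that by blast
    then have "c y 0 = c x 0" "restr (c x) m = restr (c y) m"
      by (auto simp: restr_eq_iff)
    with code_mono \<open>x < y\<close> show ?thesis unfolding rcone_def rsequences_def by simp
  qed (simp add: rcone_def)
  then have "{x..<x+e} \<subseteq> rcone x m" by blast
  with \<open>e > 0\<close> show ?thesis by blast
qed

lemma rcone_subset_interval:
  assumes "e > 0"
  obtains m where "rcone x m \<subseteq> {x..<x+e}"
proof -
  obtain m where m: "\<forall>u. restr (c u) m = restr (c x) m \<longrightarrow> \<bar>u - x\<bar> < e"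
    using code_localizes[OF assms] by blast
  have "u \<in> {x..<x+e}" if "u \<in> rcone x (Suc m)" for u
  proof (cases "u = x")
    case False
    with that have "seq_less (c x) (c u)" "restr (c x) (Suc m) = restr (c u) (Suc m)"
      unfolding rcone_def rsequences_def by auto
    then have "x < u" "restr (c u) m = restr (c x) m"
      using code_less_imp_less by (auto simp: restr_eq_iff)
    with m show ?thesis by auto
  qed (use assms in simp)
  then show ?thesis using that by blast
qed

lemma openin_rcone: "openin sorgenfrey (rcone x m)"
  unfolding openin_sorgenfrey
proof
  fix u assume "u \<in> rcone x m"
  moreover obtain e where "e > 0" "{u..<u+e} \<subseteq> rcone u m"
    using interval_subset_rcone by blast
  ultimately show "\<exists>e>0. {u..<u+e} \<subseteq> rcone x m" using rcone_trans by blast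
qed

lemma nbhd_base_rcone: "open_nbhd_base sorgenfrey x (range (rcone x))"
  unfolding open_nbhd_base_def
proof (intro conjI ballI allI impI)
  fix U assume "openin sorgenfrey U \<and> x \<in> U"
  then obtain e where "e > 0" "{x..<x+e} \<subseteq> U" unfolding openin_sorgenfrey by blast
  moreover obtain m where "rcone x m \<subseteq> {x..<x+e}"
    using rcone_subset_interval[OF \<open>e > 0\<close>] by blast
  ultimately show "\<exists>B\<in>range (rcone x). B \<subseteq> U" by blast
qed (auto simp: openin_rcone)

lemma image_rcone:
  assumes fruit: "\<And>u. f u \<in> fruit V (c u)"
    and lift: "\<And>w p n. w \<in> fruit V p \<Longrightarrow> \<exists>u. f u = w \<and> restr (c u) n = restr p n"
  shows "f ` rcone x m = cut V (c x) m \<union> {f x}"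
proof (intro equalityI subsetI)
  fix w assume "w \<in> f ` rcone x m"
  then obtain u where "w = f u" "u = x \<or> c u \<in> rsequences (c x) m"
    unfolding rcone_def by blast
  with fruit show "w \<in> cut V (c x) m \<union> {f x}"
    unfolding cut_def by blast
next
  fix w assume "w \<in> cut V (c x) m \<union> {f x}"
  then consider "w = f x" | p where "p \<in> rsequences (c x) m" "w \<in> fruit V p"
    unfolding cut_def by blast
  then show "w \<in> f ` rcone x m"
  proof cases
    case (2 p)
    then obtain j where j: "\<And>r. restr r (Suc j) = restr p (Suc j) \<Longrightarrow> r \<in> rsequences (c x) m"
      using rsequences_contains_cylinder by blast
    obtain u where "f u = w" "restr (c u) (Suc j) = restr p (Suc j)"
      using lift[OF 2(2)] by blast
    with j show ?thesis unfolding rcone_def by blast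
  qed (simp add: rcone_def)
qed

lemma sorgenfrey_base_of_open_image:
  assumes cont: "continuous_map sorgenfrey T f" and opn: "open_map sorgenfrey T f"
    and onto: "f ` topspace sorgenfrey = topspace T"
  shows "sorgenfrey_base T (\<lambda>a. f ` code_cylinder a)"
proof -
  let ?V = "\<lambda>a. f ` code_cylinder a"
  have fruit: "f u \<in> fruit ?V (c u)" for u
    unfolding fruit_def code_cylinder_def by auto
  have lift: "\<exists>u. f u = w \<and> restr (c u) n = restr p n" if "w \<in> fruit ?V p" for w p n
    using that unfolding fruit_def code_cylinder_def by fastforce
  have BB: "c u \<in> BB ?V (f u) T" for u
  proof -
    have "{cut ?V (c u) m \<union> {f u} | m. True} = (`) f ` range (rcone u)"
      using image_rcone[OF fruit lift] by blast
    moreover have "open_nbhd_base T (f u) ((`) f ` range (rcone u))"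
      using open_nbhd_base_image[OF cont opn _ nbhd_base_rcone] by simp
    ultimately show ?thesis unfolding BB_def branches_def using fruit by simp
  qed
  have "open_scheme T ?V"
    using opn openin_code_cylinder unfolding open_map_def open_scheme_def by blast
  moreover have "complete_scheme ?V"
    unfolding complete_scheme_def
  proof
    fix q
    obtain u where "q = c u" using surj_code by (metis surjD)
    with fruit show "fruit ?V q \<noteq> {}" by blast
  qed
  moreover have "covering_scheme (topspace T) ?V"
    unfolding covering_scheme_def
  proof (intro conjI allI)
    show "?V [] = topspace T" using onto by (simp add: code_cylinder_Nil)
    show "?V a = (\<Union>n. ?V (a @ [n]))" for a
      unfolding image_UN[symmetric] by (metis code_cylinder_split)
  qed
  moreover have "\<exists>t\<in>BB ?V x T. restr t n = restr q n" if q: "q \<in> branches ?V x" for x q n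
  proof -
    obtain u where "f u = x" "restr (c u) n = restr q n"
      using lift q unfolding branches_def by blast
    with BB show ?thesis by blast
  qed
  moreover have "\<exists>z\<in>topspace T. q \<in> BB ?V z T" for q
  proof -
    obtain u where "q = c u" using surj_code by (metis surjD)
    moreover have "f u \<in> topspace T" using onto by auto
    ultimately show ?thesis using BB by blast
  qed
  ultimately show ?thesis unfolding sorgenfrey_base_def by blast
qed

lemma open_image_of_sorgenfrey_base:
  assumes "Hausdorff_space T" and base: "sorgenfrey_base T V"
  obtains f where "continuous_map sorgenfrey T f" "open_map sorgenfrey T f"
    "f ` topspace sorgenfrey = topspace T"
proof -
  have complete: "complete_scheme V" and covering: "covering_scheme (topspace T) V"
    and root: "V [] = topspace T"
    and S1: "\<And>x q n. x \<in> topspace T \<Longrightarrow> q \<in> branches V x \<Longrightarrow> \<exists>t\<in>BB V x T. restr t n = restr q n"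
    and S2: "\<And>q. \<exists>z\<in>topspace T. q \<in> BB V z T"
    using base unfolding sorgenfrey_base_def covering_scheme_def by blast+
  define f where "f x = (THE z. z \<in> topspace T \<and> c x \<in> BB V z T)" for x
  have f_eq: "f u = z" if "z \<in> topspace T" "c u \<in> BB V z T" for u z
    unfolding f_def using that BB_unique[OF assms(1) complete] by (intro the_equality) blast+
  have f: "f u \<in> topspace T \<and> c u \<in> BB V (f u) T" for u
    using S2[of "c u"] f_eq by metis
  have fruit: "f u \<in> fruit V (c u)" for u
    using f unfolding BB_def branches_def by blast
  have lift: "\<exists>u. f u = w \<and> restr (c u) n = restr p n" if w: "w \<in> fruit V p" for w p n
  proof -
    have "w \<in> V (restr p 0)" using w unfolding fruit_def by blast
    with root have "w \<in> topspace T" by simp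
    with S1[of w p n] w obtain t where "t \<in> BB V w T" "restr t n = restr p n"
      unfolding branches_def by blast
    moreover obtain u where "t = c u" using surj_code by (metis surjD)
    ultimately show ?thesis using f_eq \<open>w \<in> topspace T\<close> by blast
  qed
  have "open_nbhd_base T (f x) ((`) f ` range (rcone x))" for x
  proof -
    have "{cut V (c x) m \<union> {f x} | m. True} = (`) f ` range (rcone x)"
      using image_rcone[OF fruit lift] by blast
    moreover have "open_nbhd_base T (f x) {cut V (c x) m \<union> {f x} | m. True}"
      using f[of x] unfolding BB_def by blast
    ultimately show ?thesis by simp
  qed
  then have "continuous_map sorgenfrey T f" "open_map sorgenfrey T f"
    using continuous_open_map_of_nbhd_bases[of sorgenfrey "\<lambda>x. range (rcone x)" T f]
      nbhd_base_rcone by auto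
  moreover have "f ` topspace sorgenfrey = topspace T"
  proof (intro equalityI subsetI)
    fix w assume "w \<in> topspace T"
    then obtain q where "w \<in> fruit V q"
      using covering_scheme_branch[OF covering] unfolding branches_def by blast
    then show "w \<in> f ` topspace sorgenfrey" using lift by fastforce
  qed (use f in auto)
  ultimately show ?thesis using that by blast
qed

end

section \<open>A coding of the reals\<close>

text \<open>The unit interval is cut into the blocks [n/(n+1), (n+1)/(n+2)); digit s is the block
  containing s, rescale maps that block affinely (with slope (n+1)(n+2) \<ge> 2) onto [0,1), and
  unrescale n is the inverse of rescale on block n.\<close>

definition digit :: "real \<Rightarrow> nat" where
  "digit s = nat \<lfloor>s / (1 - s)\<rfloor>"

definition rescale :: "real \<Rightarrow> real" where
  "rescale s = (s * (real (digit s) + 1) - real (digit s)) * (real (digit s) + 2)"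

definition unrescale :: "nat \<Rightarrow> real \<Rightarrow> real" where
  "unrescale n t = (real n + t / (real n + 2)) / (real n + 1)"

lemma digit_bounds:
  fixes s :: real
  assumes "0 \<le> s" "s < 1"
  shows "real (digit s) \<le> s * (real (digit s) + 1)" "s * (real (digit s) + 2) < real (digit s) + 1"
proof -
  have pos: "0 < 1 - s" using assms by simp
  define k where "k = \<lfloor>s / (1 - s)\<rfloor>"
  have "0 \<le> k" unfolding k_def using assms by simp
  then have eq: "real (digit s) = of_int k" unfolding digit_def k_def[symmetric] by simp
  have "of_int k \<le> s / (1 - s)" "s / (1 - s) < of_int k + 1" unfolding k_def by linarith+
  then have "of_int k * (1 - s) \<le> s" "s < (of_int k + 1) * (1 - s)"
    using pos by (simp_all add: pos_le_divide_eq pos_divide_less_eq)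
  then show "real (digit s) \<le> s * (real (digit s) + 1)" "s * (real (digit s) + 2) < real (digit s) + 1"
    unfolding eq by (simp_all add: algebra_simps)
qed

lemma digit_eqI:
  assumes "0 \<le> s" "s < 1" "real n \<le> s * (real n + 1)" "s * (real n + 2) < real n + 1"
  shows "digit s = n"
proof -
  have pos: "0 < 1 - s" using assms by simp
  have "real n * (1 - s) \<le> s" "s < (real n + 1) * (1 - s)"
    using assms(3,4) by (simp_all add: algebra_simps)
  then have "real n \<le> s / (1 - s)" "s / (1 - s) < real n + 1"
    using pos by (simp_all add: pos_le_divide_eq pos_divide_less_eq)
  then have "\<lfloor>s / (1 - s)\<rfloor> = int n" by (simp add: floor_eq_iff)
  then show ?thesis unfolding digit_def by simp
qed

lemma digit_mono:
  assumes "0 \<le> s" "s \<le> s'" "s' < 1"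
  shows "digit s \<le> digit s'"
proof -
  have "s / (1 - s) \<le> s' / (1 - s')" using assms by (intro frac_le) auto
  then show ?thesis unfolding digit_def by (intro nat_mono floor_mono)
qed

lemma digit_locally_constant:
  assumes "0 \<le> s" "s < 1"
  obtains d where "d > 0" "\<And>s'. s \<le> s' \<Longrightarrow> s' < s + d \<Longrightarrow> digit s' = digit s"
proof -
  define n where "n = real (digit s)"
  have n: "n \<le> s * (n + 1)" "s * (n + 2) < n + 1"
    using digit_bounds[OF assms] unfolding n_def by simp_all
  define d where "d = (n + 1) / (n + 2) - s"
  have "d > 0" using n(2) unfolding d_def n_def by (simp add: pos_less_divide_eq)
  moreover have "digit s' = digit s" if s': "s \<le> s'" "s' < s + d" for s'
  proof -
    have "s' < (n + 1) / (n + 2)" using s' unfolding d_def by simp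
    then have "s' * (n + 2) < n + 1" unfolding n_def by (simp add: pos_less_divide_eq)
    moreover have "s * (n + 1) \<le> s' * (n + 1)"
      using s'(1) unfolding n_def by (simp add: mult_right_mono)
    then have "n \<le> s' * (n + 1)" using n(1) by simp
    moreover have "(n + 1) / (n + 2) < 1" unfolding n_def by simp
    then have "s' < 1" using \<open>s' < (n + 1) / (n + 2)\<close> by linarith
    ultimately show ?thesis
      using digit_eqI[of s' "digit s"] assms s'(1) unfolding n_def by simp
  qed
  ultimately show ?thesis using that by blast
qed

lemma rescale_range:
  assumes "0 \<le> s" "s < 1"
  shows "0 \<le> rescale s" "rescale s < 1"
proof -
  define n where "n = real (digit s)"
  have n: "0 \<le> n" "n \<le> s * (n + 1)" "s * (n + 2) < n + 1"
    using digit_bounds[OF assms] unfolding n_def by simp_all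
  have t: "rescale s = (s * (n + 1) - n) * (n + 2)" unfolding rescale_def n_def by simp
  show "0 \<le> rescale s" unfolding t using n by simp
  have "s * (n + 2) * (n + 1) < (n + 1) * (n + 1)"
    using n by (simp add: mult_strict_right_mono)
  then show "rescale s < 1" unfolding t by (simp add: algebra_simps)
qed

lemma rescale_diff:
  assumes "digit s = digit s'"
  shows "rescale s' - rescale s = (s' - s) * ((real (digit s) + 1) * (real (digit s) + 2))"
  unfolding rescale_def assms by (simp add: algebra_simps)

lemma rescale_factor_ge_2: "2 \<le> (real n + 1) * (real n + 2)"
proof -
  have "1 * 2 \<le> (real n + 1) * (real n + 2)" by (rule mult_mono) auto
  then show ?thesis by simp
qed

lemma unrescale_rescale:
  assumes "0 \<le> s" "s < 1"
  shows "unrescale (digit s) (rescale s) = s"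
proof -
  define n where "n = real (digit s)"
  have p: "n + 1 \<noteq> 0" "n + 2 \<noteq> 0" unfolding n_def by simp_all
  then have "rescale s / (n + 2) = s * (n + 1) - n" unfolding rescale_def n_def[symmetric] by simp
  then show ?thesis unfolding unrescale_def n_def[symmetric] using p by simp
qed

lemma unrescale_le_iff: "unrescale n t \<le> unrescale n t' \<longleftrightarrow> t \<le> t'"
  unfolding unrescale_def by (simp add: divide_le_cancel add_pos_pos)

lemma unrescale_less_iff: "unrescale n t < unrescale n t' \<longleftrightarrow> t < t'"
  by (meson not_le unrescale_le_iff)

lemma unrescale_0: "unrescale n 0 = real n / (real n + 1)"
  unfolding unrescale_def by simp

lemma unrescale_1: "unrescale n 1 = (real n + 1) / (real n + 2)"
proof -
  have "real n + 1 \<noteq> 0" "real n + 2 \<noteq> 0" by simp_all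
  have "real n + 1 / (real n + 2) = (real n * (real n + 2) + 1) / (real n + 2)"
    by (simp add: add_divide_eq_iff)
  also have "real n * (real n + 2) + 1 = (real n + 1) * (real n + 1)"
    by (simp add: algebra_simps)
  finally show ?thesis unfolding unrescale_def by simp
qed

lemma unrescale_range:
  assumes "0 \<le> t" "t \<le> 1"
  shows "0 \<le> unrescale n t \<and> unrescale n t \<le> 1"
proof -
  have "unrescale n 0 \<le> unrescale n t" "unrescale n t \<le> unrescale n 1"
    using assms by (simp_all add: unrescale_le_iff)
  moreover have "0 \<le> unrescale n 0" "unrescale n 1 \<le> 1"
    unfolding unrescale_0 unrescale_1 by simp_all
  ultimately show ?thesis by linarith
qed

lemma unrescale_1_less: "unrescale n 1 < 1"
  unfolding unrescale_1 by simp

lemma digit_eq_of_unrescale_bounds: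
  assumes "unrescale n 0 \<le> s" "s < unrescale n 1"
  shows "0 \<le> s" "s < 1" "digit s = n"
proof -
  show "0 \<le> s" using assms(1) unfolding unrescale_0 by (meson divide_nonneg_nonneg of_nat_0_le_iff order_trans add_nonneg_nonneg zero_le_one)
  show "s < 1" using assms(2) unrescale_1_less[of n] by simp
  have "real n \<le> s * (real n + 1)" using assms(1) unfolding unrescale_0 by (simp add: pos_divide_le_eq)
  moreover have "s * (real n + 2) < real n + 1" using assms(2) unfolding unrescale_1 by (simp add: pos_less_divide_eq)
  ultimately show "digit s = n" using digit_eqI \<open>0 \<le> s\<close> \<open>s < 1\<close> by blast
qed

definition digits :: "real \<Rightarrow> nat \<Rightarrow> nat" where
  "digits s k = digit ((rescale ^^ k) s)"

lemma digits_Suc: "digits s (Suc k) = digits (rescale s) k"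
  unfolding digits_def by (simp add: funpow_Suc_right del: funpow.simps)

lemma digits_0: "digits s 0 = digit s"
  unfolding digits_def by simp

lemma restr_digits_Suc: "restr (digits s) (Suc k) = digit s # restr (digits (rescale s)) k"
  unfolding restr_Suc_Cons digits_Suc digits_0 by (simp add: fun_eq_iff)

lemma digits_prefix_close:
  assumes "0 \<le> s" "s < 1" "0 \<le> s'" "s' < 1" "restr (digits s) k = restr (digits s') k"
  shows "\<bar>s - s'\<bar> * 2 ^ k < 1"
  using assms
proof (induction k arbitrary: s s')
  case (Suc k)
  have d: "digit s = digit s'" and r: "restr (digits (rescale s)) k = restr (digits (rescale s')) k"
    using Suc.prems(5) unfolding restr_digits_Suc by simp_all
  have IH: "\<bar>rescale s - rescale s'\<bar> * 2 ^ k < 1"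
    using Suc.IH[OF rescale_range[OF Suc.prems(1,2)] rescale_range[OF Suc.prems(3,4)] r] .
  define F where "F = (real (digit s) + 1) * (real (digit s) + 2)"
  have "\<bar>rescale s - rescale s'\<bar> = \<bar>s - s'\<bar> * F"
  proof -
    have "\<bar>rescale s - rescale s'\<bar> = \<bar>rescale s' - rescale s\<bar>" by simp
    also have "\<dots> = \<bar>s' - s\<bar> * F" unfolding rescale_diff[OF d] abs_mult F_def by simp
    finally show ?thesis by (simp add: abs_minus_commute)
  qed
  moreover have "2 \<le> F" unfolding F_def by (rule rescale_factor_ge_2)
  ultimately have "\<bar>s - s'\<bar> * 2 \<le> \<bar>rescale s - rescale s'\<bar>" by (simp add: mult_left_mono)
  then have "\<bar>s - s'\<bar> * 2 * 2 ^ k \<le> \<bar>rescale s - rescale s'\<bar> * 2 ^ k" by (simp add: mult_right_mono)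
  with IH have "\<bar>s - s'\<bar> * 2 * 2 ^ k < 1" by linarith
  then show ?case by (simp add: mult.assoc)
qed (simp add: abs_if)

lemma digits_le_of_prefix:
  assumes "0 \<le> s" "s < s'" "s' < 1" "restr (digits s) k = restr (digits s') k"
  shows "digits s k \<le> digits s' k"
  using assms
proof (induction k arbitrary: s s')
  case 0
  then show ?case unfolding digits_def by (simp add: digit_mono)
next
  case (Suc k)
  have d: "digit s = digit s'" and r: "restr (digits (rescale s)) k = restr (digits (rescale s')) k"
    using Suc.prems(4) unfolding restr_digits_Suc by simp_all
  have "0 < (s' - s) * ((real (digit s) + 1) * (real (digit s) + 2))"
    using Suc.prems(2) by simp
  then have "rescale s < rescale s'" using rescale_diff[OF d] by simp
  moreover have "0 \<le> rescale s" "rescale s' < 1" using rescale_range Suc.prems by auto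
  ultimately show ?case using Suc.IH r by (simp add: digits_Suc)
qed

lemma seq_less_digits:
  assumes "0 \<le> s" "s < s'" "s' < 1"
  shows "seq_less (digits s) (digits s')"
proof -
  have "\<exists>k. digits s k \<noteq> digits s' k"
  proof (rule ccontr)
    assume "\<not> (\<exists>k. digits s k \<noteq> digits s' k)"
    then have all: "restr (digits s) k = restr (digits s') k" for k unfolding restr_eq_iff by simp
    obtain k where "1 / (s' - s) < 2 ^ k" using real_arch_pow[of 2 "1 / (s' - s)"] by auto
    then have "1 < (s' - s) * 2 ^ k" using assms by (simp add: divide_less_eq mult.commute)
    moreover have "\<bar>s - s'\<bar> * 2 ^ k < 1" using digits_prefix_close[OF _ _ _ _ all[of k]] assms by simp
    ultimately show False using assms by simp
  qed
  define n where "n = (LEAST i. digits s i \<noteq> digits s' i)"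
  have ne: "digits s n \<noteq> digits s' n" unfolding n_def by (rule LeastI_ex) fact
  have eq: "\<forall>i<n. digits s i = digits s' i" unfolding n_def using not_less_Least by blast
  then have "digits s n \<le> digits s' n" using digits_le_of_prefix assms by (simp add: restr_eq_iff)
  with ne eq show ?thesis unfolding seq_less_iff by (intro exI[of _ n]) simp
qed

lemma digits_locally_constant:
  assumes "0 \<le> s" "s < 1"
  shows "\<exists>e>0. \<forall>s'\<in>{s..<s+e}. restr (digits s') m = restr (digits s) m"
  using assms
proof (induction m arbitrary: s)
  case 0
  show ?case by (intro exI[of _ 1]) simp
next
  case (Suc m)
  obtain e' where "e' > 0" and e': "\<forall>s'\<in>{rescale s..<rescale s + e'}. restr (digits s') m = restr (digits (rescale s)) m"
    using Suc.IH[OF rescale_range[OF Suc.prems]] by blast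
  obtain d where "d > 0" and d: "\<And>s'. s \<le> s' \<Longrightarrow> s' < s + d \<Longrightarrow> digit s' = digit s"
    using digit_locally_constant[OF Suc.prems] by blast
  define F where "F = (real (digit s) + 1) * (real (digit s) + 2)"
  have "F > 0" unfolding F_def by simp
  define e where "e = min d (e' / F)"
  have "e > 0" unfolding e_def using \<open>d > 0\<close> \<open>e' > 0\<close> \<open>F > 0\<close> by simp
  moreover have "restr (digits s') (Suc m) = restr (digits s) (Suc m)" if s': "s' \<in> {s..<s+e}" for s'
  proof -
    have "s \<le> s'" "s' < s + d" "s' - s < e' / F" using s' unfolding e_def by auto
    then have ds: "digit s' = digit s" and "(s' - s) * F < e'"
      using d[of s'] \<open>F > 0\<close> by (simp_all add: pos_less_divide_eq)
    moreover have "rescale s' - rescale s = (s' - s) * F"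
      using rescale_diff[OF ds[symmetric]] unfolding F_def by simp
    moreover have "0 \<le> (s' - s) * F" using \<open>s \<le> s'\<close> \<open>F > 0\<close> by simp
    ultimately have "rescale s' \<in> {rescale s..<rescale s + e'}" by simp
    then have "restr (digits (rescale s')) m = restr (digits (rescale s)) m" using e' by blast
    then show ?thesis unfolding restr_digits_Suc ds by simp
  qed
  ultimately show ?case by blast
qed

definition unrescales :: "nat list \<Rightarrow> real \<Rightarrow> real" where
  "unrescales w t = foldr unrescale w t"

lemma unrescales_Nil [simp]: "unrescales [] t = t"
  unfolding unrescales_def by simp

lemma unrescales_Cons: "unrescales (a # w) t = unrescale a (unrescales w t)"
  unfolding unrescales_def by simp

lemma unrescales_snoc: "unrescales (w @ [a]) t = unrescales w (unrescale a t)"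
  unfolding unrescales_def by simp

lemma unrescales_range: "0 \<le> t \<Longrightarrow> t \<le> 1 \<Longrightarrow> 0 \<le> unrescales w t \<and> unrescales w t \<le> 1"
  by (induction w) (simp_all add: unrescales_Cons unrescale_range)

lemma unrescales_le_iff: "unrescales w t \<le> unrescales w t' \<longleftrightarrow> t \<le> t'"
  by (induction w) (simp_all add: unrescales_Cons unrescale_le_iff)

lemma unrescales_less_iff: "unrescales w t < unrescales w t' \<longleftrightarrow> t < t'"
  by (induction w) (simp_all add: unrescales_Cons unrescale_less_iff)

lemma restr_digits_unrescales:
  "unrescales w 0 \<le> s \<Longrightarrow> s < unrescales w 1 \<Longrightarrow> restr (digits s) (length w) = w"
proof (induction w arbitrary: s)
  case (Cons a w)
  have A: "0 \<le> unrescales w 0" and B: "unrescales w 1 \<le> 1"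
    using unrescales_range[of 0 w] unrescales_range[of 1 w] by simp_all
  have s: "unrescale a (unrescales w 0) \<le> s" "s < unrescale a (unrescales w 1)"
    using Cons.prems unfolding unrescales_Cons by simp_all
  have "unrescale a 0 \<le> unrescale a (unrescales w 0)" using A by (simp add: unrescale_le_iff)
  with s(1) have lower: "unrescale a 0 \<le> s" by linarith
  have "unrescale a (unrescales w 1) \<le> unrescale a 1" using B by (simp add: unrescale_le_iff)
  with s(2) have upper: "s < unrescale a 1" by linarith
  note s01 = digit_eq_of_unrescale_bounds(1,2)[OF lower upper]
  have d: "digit s = a" using digit_eq_of_unrescale_bounds(3)[OF lower upper] .
  have es: "unrescale a (rescale s) = s" using unrescale_rescale[OF s01] d by simp
  have "unrescales w 0 \<le> rescale s" "rescale s < unrescales w 1"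
    using s es unrescale_le_iff[of a] unrescale_less_iff[of a] by metis+
  then have "restr (digits (rescale s)) (length w) = w" using Cons.IH by blast
  then show ?case using d by (simp add: restr_digits_Suc)
qed simp

lemma digits_surj: "\<exists>s. 0 \<le> s \<and> s < 1 \<and> digits s = p"
proof -
  define \<alpha> where "\<alpha> k = unrescales (restr p k) 0" for k
  define \<beta> where "\<beta> k = unrescales (restr p k) 1" for k
  have "incseq \<alpha>"
  proof (rule incseq_SucI)
    fix k
    have "0 \<le> unrescale (p k) 0" using unrescale_range[of 0] by simp
    then show "\<alpha> k \<le> \<alpha> (Suc k)" unfolding \<alpha>_def restr_Suc unrescales_snoc by (simp add: unrescales_le_iff)
  qed
  have \<beta>_Suc: "\<beta> (Suc k) < \<beta> k" for k
    unfolding \<beta>_def restr_Suc unrescales_snoc unrescales_less_iff by (rule unrescale_1_less)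
  then have "decseq \<beta>" by (intro decseq_SucI less_imp_le)
  have "\<alpha> k < \<beta> k" for k unfolding \<alpha>_def \<beta>_def unrescales_less_iff by simp
  have \<alpha>_\<beta>: "\<alpha> k \<le> \<beta> j" for k j
  proof -
    have "\<alpha> k \<le> \<alpha> (max k j)" "\<beta> (max k j) \<le> \<beta> j"
      using \<open>incseq \<alpha>\<close> \<open>decseq \<beta>\<close> by (simp_all add: incseq_def decseq_def)
    with \<open>\<alpha> (max k j) < \<beta> (max k j)\<close> show ?thesis by simp
  qed
  define s where "s = (SUP k. \<alpha> k)"
  have "bdd_above (range \<alpha>)" using \<alpha>_\<beta>[of _ 0] by (intro bdd_aboveI2) blast
  then have \<alpha>_s: "\<alpha> k \<le> s" for k unfolding s_def by (simp add: cSUP_upper)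
  have s_\<beta>: "s \<le> \<beta> j" for j unfolding s_def using \<alpha>_\<beta> by (intro cSUP_least) auto
  have "restr (digits s) k = restr p k" for k
  proof -
    have "s < \<beta> k" using s_\<beta>[of "Suc k"] \<beta>_Suc[of k] by simp
    then have "restr (digits s) (length (restr p k)) = restr p k"
      using \<alpha>_s[of k] unfolding \<alpha>_def \<beta>_def by (intro restr_digits_unrescales) auto
    then show ?thesis by simp
  qed
  then have "digits s = p" by (metis lessI restr_eq_iff ext)
  moreover have "0 \<le> s" using \<alpha>_s[of 0] unfolding \<alpha>_def by simp
  moreover have "s < 1" using s_\<beta>[of 1] \<beta>_Suc[of 0] unfolding \<beta>_def by simp
  ultimately show ?thesis by blast
qed

definition real_code :: "real \<Rightarrow> nat \<Rightarrow> nat" where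
  "real_code x k = (case k of 0 \<Rightarrow> int_encode \<lfloor>x\<rfloor> | Suc j \<Rightarrow> digits (frac x) j)"

lemma restr_real_code_Suc: "restr (real_code x) (Suc m) = int_encode \<lfloor>x\<rfloor> # restr (digits (frac x)) m"
  unfolding restr_Suc_Cons by (simp add: real_code_def)

lemma surj_real_code: "surj real_code"
  unfolding surj_def
proof
  fix p
  obtain s where s: "0 \<le> s" "s < 1" "digits s = (\<lambda>k. p (Suc k))" using digits_surj by blast
  define x where "x = of_int (int_decode (p 0)) + s"
  have "\<lfloor>x\<rfloor> = int_decode (p 0)" unfolding x_def using s by (simp add: floor_eq_iff)
  moreover then have "frac x = s" unfolding frac_def x_def by simp
  ultimately have "real_code x = p" using s by (auto simp: real_code_def split: nat.split)
  then show "\<exists>x. p = real_code x" by metis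
qed

lemma real_code_locally_constant: "\<exists>e>0. \<forall>y\<in>{x..<x+e}. restr (real_code y) m = restr (real_code x) m"
proof -
  obtain e' where "e' > 0" and e': "\<forall>s'\<in>{frac x..<frac x + e'}. restr (digits s') m = restr (digits (frac x)) m"
    using digits_locally_constant[of "frac x" m] frac_lt_1 by auto
  define e where "e = min e' (1 - frac x)"
  have "e > 0" unfolding e_def using \<open>e' > 0\<close> frac_lt_1[of x] by simp
  moreover have "restr (real_code y) m = restr (real_code x) m" if y: "y \<in> {x..<x+e}" for y
  proof -
    have "e \<le> 1 - frac x" unfolding e_def by simp
    then have "y < of_int \<lfloor>x\<rfloor> + 1" using y unfolding frac_def by simp
    moreover have "x \<le> y" using y by simp
    then have "of_int \<lfloor>x\<rfloor> \<le> y" using of_int_floor_le[of x] by linarith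
    ultimately have "\<lfloor>y\<rfloor> = \<lfloor>x\<rfloor>" by (simp add: floor_eq_iff)
    then have "frac y = frac x + (y - x)" unfolding frac_def by simp
    then have "frac y \<in> {frac x..<frac x + e'}" using y unfolding e_def by auto
    then have "restr (digits (frac y)) m = restr (digits (frac x)) m" using e' by blast
    with \<open>\<lfloor>y\<rfloor> = \<lfloor>x\<rfloor>\<close> have "restr (real_code y) (Suc m) = restr (real_code x) (Suc m)"
      unfolding restr_real_code_Suc by simp
    then show ?thesis by (rule restr_prefix) simp
  qed
  ultimately show ?thesis by blast
qed

lemma real_code_localizes:
  assumes "e > 0"
  shows "\<exists>m. \<forall>u. restr (real_code u) m = restr (real_code x) m \<longrightarrow> \<bar>u - x\<bar> < e"
proof -
  obtain k where "1 / e < 2 ^ k" using real_arch_pow[of 2 "1 / e"] by auto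
  then have k: "1 < e * 2 ^ k" using assms by (simp add: divide_less_eq mult.commute)
  have "\<bar>u - x\<bar> < e" if "restr (real_code u) (Suc k) = restr (real_code x) (Suc k)" for u
  proof -
    have "int_encode \<lfloor>u\<rfloor> = int_encode \<lfloor>x\<rfloor>" and r: "restr (digits (frac u)) k = restr (digits (frac x)) k"
      using that unfolding restr_real_code_Suc by simp_all
    then have "\<lfloor>u\<rfloor> = \<lfloor>x\<rfloor>" by (simp add: inj_int_encode inj_eq)
    then have "u - x = frac u - frac x" unfolding frac_def by simp
    moreover have "\<bar>frac u - frac x\<bar> * 2 ^ k < 1"
      using digits_prefix_close[OF frac_ge_0 frac_lt_1 frac_ge_0 frac_lt_1 r] .
    ultimately have "\<bar>u - x\<bar> * 2 ^ k < 1" by simp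
    then have "\<bar>u - x\<bar> * 2 ^ k < e * 2 ^ k" using k by linarith
    then show ?thesis by (rule mult_right_less_imp_less) simp
  qed
  then show ?thesis by blast
qed

lemma real_code_mono:
  assumes "x < y" "real_code x 0 = real_code y 0"
  shows "seq_less (real_code x) (real_code y)"
proof -
  have "\<lfloor>x\<rfloor> = \<lfloor>y\<rfloor>" using assms(2) by (simp add: real_code_def inj_int_encode inj_eq)
  then have "frac x < frac y" using assms(1) unfolding frac_def by simp
  then have "seq_less (digits (frac x)) (digits (frac y))"
    using seq_less_digits[OF frac_ge_0 _ frac_lt_1] by simp
  then obtain n where n: "\<forall>i<n. digits (frac x) i = digits (frac y) i" "digits (frac x) n < digits (frac y) n"
    unfolding seq_less_iff by blast
  have "\<forall>i<Suc n. real_code x i = real_code y i"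
    using n(1) assms(2) by (auto simp: real_code_def less_Suc_eq_0_disj)
  moreover have "real_code x (Suc n) < real_code y (Suc n)" using n(2) by (simp add: real_code_def)
  ultimately show ?thesis unfolding seq_less_iff by blast
qed

interpretation real_coding: sorgenfrey_coding real_code
  using surj_real_code real_code_locally_constant real_code_localizes real_code_mono
  by unfold_locales blast+

theorem theorem1:
  fixes T :: "'a topology"
  assumes "Hausdorff_space T"
  shows "(\<exists>f. continuous_map sorgenfrey T f \<and> open_map sorgenfrey T f \<and>
              f ` topspace sorgenfrey = topspace T)
         \<longleftrightarrow> (\<exists>V. sorgenfrey_base T V)"
proof
  assume "\<exists>f. continuous_map sorgenfrey T f \<and> open_map sorgenfrey T f \<and>
              f ` topspace sorgenfrey = topspace T"
  then show "\<exists>V. sorgenfrey_base T V"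
    using real_coding.sorgenfrey_base_of_open_image by blast
next
  assume "\<exists>V. sorgenfrey_base T V"
  then show "\<exists>f. continuous_map sorgenfrey T f \<and> open_map sorgenfrey T f \<and>
              f ` topspace sorgenfrey = topspace T"
    using real_coding.open_image_of_sorgenfrey_base[OF assms] by metis
qed

end
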